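(* Let $\mathbb{K}$ be a field of characteristic zero, let $t,s\in\mathbb{K}\setminus\{0,1\}$, and let $\mathfrak{g}$ be a finite-dimensional non-perfect Lie algebra over $\mathbb{K}$ (i.e. $\mathfrak{g}^{(2)}\neq\mathfrak{g}$). Then $\mathcal{D}(t,1,0)(\mathfrak{g})$ and $\mathcal{D}(s,1,0)(\mathfrak{g})$ are isomorphic vector spaces.
   Context: For a Lie algebra $\mathfrak{g}=(V,\mu)$, the derived algebra $\mathfrak{g}^{(2)}$ is the linear span of all products $\mu(X,Y)$. For $t\in\mathbb{K}$, $\mathcal{D}(t,1,0)(\mathfrak{g})$ denotes the space of $(t,1,0)$-derivations of $\mathfrak{g}$: linear maps $D:V\to V$ with $tD\mu(X,Y)=\mu(DX,Y)$ for all $X,Y\in V$. *)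

theory Defs
  imports Main "HOL.Vector_Spaces"
begin

definition lie_algebra :: "('k::field \<Rightarrow> 'v::ab_group_add \<Rightarrow> 'v) \<Rightarrow> ('v \<Rightarrow> 'v \<Rightarrow> 'v) \<Rightarrow> bool" where
  "lie_algebra scale mu \<longleftrightarrow>
     vector_space scale \<and>
     (\<forall>x. Vector_Spaces.linear scale scale (mu x)) \<and>
     (\<forall>y. Vector_Spaces.linear scale scale (\<lambda>x. mu x y)) \<and>
     (\<forall>x. mu x x = 0) \<and>
     (\<forall>x y z. mu x (mu y z) + mu y (mu z x) + mu z (mu x y) = 0)"

definition finite_dim :: "('k::field \<Rightarrow> 'v::ab_group_add \<Rightarrow> 'v) \<Rightarrow> bool" where
  "finite_dim scale \<longleftrightarrow> (\<exists>B. finite B \<and> module.span scale B = UNIV)"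

definition derived_algebra :: "('k::field \<Rightarrow> 'v::ab_group_add \<Rightarrow> 'v) \<Rightarrow> ('v \<Rightarrow> 'v \<Rightarrow> 'v) \<Rightarrow> 'v set" where
  "derived_algebra scale mu = module.span scale {mu x y | x y. True}"

definition t10_derivations :: "('k::field \<Rightarrow> 'v::ab_group_add \<Rightarrow> 'v) \<Rightarrow> ('v \<Rightarrow> 'v \<Rightarrow> 'v) \<Rightarrow> 'k \<Rightarrow> ('v \<Rightarrow> 'v) set" where
  "t10_derivations scale mu t =
     {D. Vector_Spaces.linear scale scale D \<and> (\<forall>x y. scale t (D (mu x y)) = mu (D x) y)}"

definition iso_endo_spaces :: "('k::field \<Rightarrow> 'v::ab_group_add \<Rightarrow> 'v) \<Rightarrow> ('v \<Rightarrow> 'v) set \<Rightarrow> ('v \<Rightarrow> 'v) set \<Rightarrow> bool" where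
  "iso_endo_spaces scale A B \<longleftrightarrow>
     (\<exists>\<phi>. bij_betw \<phi> A B \<and>
        (\<forall>D1\<in>A. \<forall>D2\<in>A. \<phi> (\<lambda>x. D1 x + D2 x) = (\<lambda>x. \<phi> D1 x + \<phi> D2 x)) \<and>
        (\<forall>c. \<forall>D\<in>A. \<phi> (\<lambda>x. scale c (D x)) = (\<lambda>x. scale c (\<phi> D x))))"

end

theory Submission
  imports Defs
begin

text \<open>For \<open>t \<notin> {0, 1}\<close> every \<open>(t,1,0)\<close>-derivation \<open>D\<close> satisfies \<open>[D z, y] = 0\<close> for all
  \<open>z\<close> in the derived algebra \<open>g\<^sup>2\<close>: the Jacobi identity, once pushed through \<open>D\<close> and once with
  \<open>D x\<close> in place of \<open>x\<close>, gives \<open>(1 - t) [D x, [y, z]] = 0\<close>. Let \<open>M a = dilation P a\<close>, for a linear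
  projection \<open>P\<close> onto \<open>g\<^sup>2\<close>, be the map that multiplies \<open>g\<^sup>2\<close> by \<open>a\<close> and fixes \<open>ker P\<close>. Then
  \<open>s D (M (t/s) [x, y]) = t D [x, y] = [D x, y] = [D (M (t/s) x), y]\<close>, so \<open>D \<mapsto> D \<circ> M (t/s)\<close>
  maps \<open>(t,1,0)\<close>-derivations to \<open>(s,1,0)\<close>-derivations, with inverse \<open>D \<mapsto> D \<circ> M (s/t)\<close>.\<close>

locale lie_alg = vector_space scale
  for scale :: "'k::field \<Rightarrow> 'v::ab_group_add \<Rightarrow> 'v" +
  fixes mu :: "'v \<Rightarrow> 'v \<Rightarrow> 'v"
  assumes linear_mu: "Vector_Spaces.linear scale scale (mu x)"
    and linear_mu_left: "Vector_Spaces.linear scale scale (\<lambda>x. mu x y)"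
    and mu_self: "mu x x = 0"
    and jacobi: "mu x (mu y z) + mu y (mu z x) + mu z (mu x y) = 0"

lemma lie_alg_iff_lie_algebra: "lie_alg scale mu \<longleftrightarrow> lie_algebra scale mu"
  unfolding lie_alg_def lie_alg_axioms_def lie_algebra_def by blast

lemma t10_derivations_linear:
  "D \<in> t10_derivations scale mu t \<Longrightarrow> Vector_Spaces.linear scale scale D"
  unfolding t10_derivations_def by blast

lemma t10_derivations_bracket:
  "D \<in> t10_derivations scale mu t \<Longrightarrow> scale t (D (mu x y)) = mu (D x) y"
  unfolding t10_derivations_def by blast

context vector_space
begin

sublocale endo: vector_space_pair scale scale ..

lemma linear_projection_exists:
  assumes "subspace S"
  obtains P where "Vector_Spaces.linear scale scale P" "range P \<subseteq> S" "\<And>x. x \<in> S \<Longrightarrow> P x = x"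
  using endo.linear_exists_left_inverse_on[OF linear_id assms inj_on_id] by auto

definition dilation :: "('b \<Rightarrow> 'b) \<Rightarrow> 'a \<Rightarrow> 'b \<Rightarrow> 'b" where
  "dilation P a x = x + scale (a - 1) (P x)"

lemma dilation_comp:
  assumes "Vector_Spaces.linear scale scale P" and "\<And>x. P (P x) = P x"
  shows "dilation P a \<circ> dilation P b = dilation P (a * b)"
proof
  fix x
  note linP = assms(1)
  have "dilation P a (dilation P b x) = x + (scale (b - 1) (P x) + scale (a - 1) (P x + scale (b - 1) (P x)))"
    by (simp add: dilation_def endo.linear_add[OF linP] endo.linear_scale[OF linP] assms(2) add.assoc)
  also have "\<dots> = x + scale ((b - 1) + (a - 1) + (a - 1) * (b - 1)) (P x)"
    by (simp only: scale_left_distrib scale_right_distrib scale_scale add.assoc)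
  also have "(b - 1) + (a - 1) + (a - 1) * (b - 1) = a * b - 1"
    by (simp add: algebra_simps)
  finally show "(dilation P a \<circ> dilation P b) x = dilation P (a * b) x"
    by (simp add: dilation_def)
qed

lemma dilation_one: "dilation P 1 = id"
  by (simp add: dilation_def fun_eq_iff)

end

context lie_alg
begin

lemma mu_add_left: "mu (x + y) z = mu x z + mu y z"
  using endo.linear_add[OF linear_mu_left] .

lemma mu_add_right: "mu x (y + z) = mu x y + mu x z"
  using endo.linear_add[OF linear_mu] .

lemma mu_scale_left: "mu (scale c x) y = scale c (mu x y)"
  using endo.linear_scale[OF linear_mu_left] .

lemma mu_scale_right: "mu x (scale c y) = scale c (mu x y)"
  using endo.linear_scale[OF linear_mu] .

lemma mu_zero_left [simp]: "mu 0 y = 0"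
  using endo.linear_0[OF linear_mu_left] .

lemma mu_anticomm: "mu y x = - mu x y"
proof -
  have "0 = mu (x + y) (x + y)"
    by (simp add: mu_self)
  also have "\<dots> = mu x y + mu y x"
    by (simp only: mu_add_left mu_add_right) (simp add: mu_self add.commute)
  finally show ?thesis
    by (simp add: eq_neg_iff_add_eq_0 add.commute)
qed

lemma t10_derivation_swap:
  assumes "D \<in> t10_derivations scale mu t"
  shows "mu (D x) y = mu x (D y)"
proof -
  note linD = t10_derivations_linear[OF assms] and bracket = t10_derivations_bracket[OF assms]
  have "mu (D x) y = - scale t (D (mu y x))"
    by (simp add: bracket[symmetric] mu_anticomm[of x y] endo.linear_neg[OF linD])
  also have "\<dots> = mu x (D y)"
    by (simp add: bracket mu_anticomm[of x "D y"])
  finally show ?thesis .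
qed

lemma t10_derivation_triple_bracket:
  assumes D: "D \<in> t10_derivations scale mu t" and "t \<noteq> 0" "t \<noteq> 1"
  shows "D (mu x (mu y z)) = 0"
proof -
  note linD = t10_derivations_linear[OF D] and bracket = t10_derivations_bracket[OF D]
    and swap = t10_derivation_swap[OF D]
  define A where "A x y z = mu (D x) (mu y z)" for x y z
  have jacobi_through_D: "A x y z + A y z x + A z x y = 0"
  proof -
    have "scale t (D (mu x (mu y z) + mu y (mu z x) + mu z (mu x y))) = 0"
      by (simp add: jacobi endo.linear_0[OF linD])
    then show ?thesis
      by (simp add: A_def endo.linear_add[OF linD] scale_right_distrib bracket)
  qed
  have "mu z (mu (D x) y) = scale t (A z x y)" "mu y (mu z (D x)) = scale t (A y z x)"
    by (simp_all add: A_def bracket[symmetric] swap[symmetric] mu_scale_right)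
  then have jacobi_with_D: "A x y z + scale t (A y z x + A z x y) = 0"
    using jacobi[of "D x" y z] by (simp add: A_def scale_right_distrib add.commute add.left_commute)
  have "A y z x + A z x y = - A x y z"
    using jacobi_through_D by (metis add.assoc add_eq_0_iff)
  with jacobi_with_D have "scale (1 - t) (A x y z) = 0"
    by (simp add: scale_left_diff_distrib)
  then have "A x y z = 0"
    using \<open>t \<noteq> 1\<close> by simp
  then show ?thesis
    using bracket[of x "mu y z"] \<open>t \<noteq> 0\<close> by (simp add: A_def)
qed

lemma t10_derivation_derived_central:
  assumes D: "D \<in> t10_derivations scale mu t" and "t \<noteq> 0" "t \<noteq> 1"
    and "z \<in> derived_algebra scale mu"
  shows "mu (D z) y = 0"
proof -
  note linD = t10_derivations_linear[OF D]
  have bracket_central: "mu (D (mu a b)) y = 0" for a b y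
    using t10_derivations_bracket[OF D, of "mu a b" y]
      t10_derivation_triple_bracket[OF assms(1-3), of y a b]
    by (simp add: mu_anticomm[of "mu a b"] endo.linear_neg[OF linD])
  have "z \<in> span {mu a b | a b. True}"
    using assms(4) unfolding derived_algebra_def .
  then show ?thesis
  proof (induction arbitrary: y rule: span_induct_alt)
    case base
    show ?case by (simp add: endo.linear_0[OF linD])
  next
    case (step c x w)
    then obtain a b where "x = mu a b"
      by blast
    then show ?case
      using step.IH bracket_central
      by (simp add: endo.linear_add[OF linD] endo.linear_scale[OF linD] mu_add_left mu_scale_left)
  qed
qed

lemma t10_derivation_comp_dilation:
  assumes D: "D \<in> t10_derivations scale mu t" and "t \<noteq> 0" "t \<noteq> 1" "s \<noteq> 0"
    and P: "Vector_Spaces.linear scale scale P" "range P \<subseteq> derived_algebra scale mu"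
      "\<And>x. x \<in> derived_algebra scale mu \<Longrightarrow> P x = x"
  shows "D \<circ> dilation P (t / s) \<in> t10_derivations scale mu s"
proof -
  note linD = t10_derivations_linear[OF D]
  have "Vector_Spaces.linear scale scale (dilation P (t / s))"
    unfolding dilation_def
    by (intro endo.linear_compose_add endo.linear_compose_scale_right linear_ident P(1))
  then have linear_comp: "Vector_Spaces.linear scale scale (D \<circ> dilation P (t / s))"
    using linD by (rule Vector_Spaces.linear_compose)
  have "scale s (D (dilation P (t / s) (mu x y))) = mu (D (dilation P (t / s) x)) y" for x y
  proof -
    have "mu x y \<in> derived_algebra scale mu"
      unfolding derived_algebra_def by (rule span_base) blast
    then have "scale s (D (dilation P (t / s) (mu x y))) = scale t (D (mu x y))"
      using \<open>s \<noteq> 0\<close>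
      by (simp add: dilation_def P(3) endo.linear_scale[OF linD] scale_left_distrib[symmetric]
          algebra_simps)
    also have "\<dots> = mu (D (dilation P (t / s) x)) y"
      using t10_derivation_derived_central[OF assms(1-3), of "P x" y] P(2)
      by (auto simp: dilation_def t10_derivations_bracket[OF D] endo.linear_add[OF linD]
          endo.linear_scale[OF linD] mu_add_left mu_scale_left)
    finally show ?thesis .
  qed
  with linear_comp show ?thesis
    unfolding t10_derivations_def by simp
qed

end

lemma iso_endo_spaces_comp_right:
  assumes "\<And>D. D \<in> A \<Longrightarrow> D \<circ> M \<in> B" "\<And>D. D \<in> B \<Longrightarrow> D \<circ> N \<in> A"
    and "M \<circ> N = id" "N \<circ> M = id"
  shows "iso_endo_spaces scale A B"
  unfolding iso_endo_spaces_def
proof (intro exI conjI ballI allI)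
  show "bij_betw (\<lambda>D. D \<circ> M) A B"
    by (rule bij_betw_byWitness[where f' = "\<lambda>D. D \<circ> N"])
      (use assms in \<open>auto simp: comp_assoc\<close>)
qed auto

theorem theorem3p5:
  fixes scale :: "'k::field_char_0 \<Rightarrow> 'v::ab_group_add \<Rightarrow> 'v"
    and mu :: "'v \<Rightarrow> 'v \<Rightarrow> 'v"
    and t s :: 'k
  assumes "lie_algebra scale mu"
    and "finite_dim scale"
    and "derived_algebra scale mu \<noteq> UNIV"
    and "t \<noteq> 0" "t \<noteq> 1" "s \<noteq> 0" "s \<noteq> 1"
  shows "iso_endo_spaces scale (t10_derivations scale mu t) (t10_derivations scale mu s)"
proof -
  interpret lie_alg scale mu
    using assms(1) lie_alg_iff_lie_algebra by blast
  obtain P where P: "Vector_Spaces.linear scale scale P" "range P \<subseteq> derived_algebra scale mu"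
    "\<And>x. x \<in> derived_algebra scale mu \<Longrightarrow> P x = x"
    using linear_projection_exists[of "derived_algebra scale mu"]
    unfolding derived_algebra_def by auto
  have "P (P x) = P x" for x
    using P(2,3) by blast
  then have "dilation P (t / s) \<circ> dilation P (s / t) = id" "dilation P (s / t) \<circ> dilation P (t / s) = id"
    using assms(4,6) by (simp_all add: dilation_comp[OF P(1)] dilation_one)
  then show ?thesis
    by (rule iso_endo_spaces_comp_right[rotated 2])
      (use t10_derivation_comp_dilation[OF _ _ _ _ P] assms(4-7) in blast)+
qed

end
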